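(* Let $(X,\tau)$ be a $\sigma$-compact Hausdorff space. The following are equivalent: (1) $X$ has the property $\textsf{S}_1(\mathcal{O},\mathcal{O})$; (2) TWO has a winning strategy in the game ${\sf G}_1(\mathcal{O},\mathcal{O})$.
   Context: $\sigma$-compact: a countable union of compact subsets. $\mathcal{O}$: open covers of $X$. $\textsf{S}_1(\mathcal{O},\mathcal{O})$: for every sequence $(\mathcal{U}_n)$ of open covers there are $U_n\in\mathcal{U}_n$ with $\{U_n:n\in\mathbb{N}\}$ covering $X$. Game ${\sf G}_1(\mathcal{O},\mathcal{O})$: in inning $n\in\mathbb{N}$ ONE chooses an open cover $O_n$ of $X$, TWO responds with $T_n\in O_n$; TWO wins if $\{T_n:n\in\mathbb{N}\}$ covers $X$, otherwise ONE wins. *)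

theory Defs
  imports "HOL-Analysis.Analysis"
begin

definition open_cover :: "'a topology \<Rightarrow> 'a set set \<Rightarrow> bool" where
  "open_cover X \<U> \<longleftrightarrow> (\<forall>U\<in>\<U>. openin X U) \<and> \<Union>\<U> = topspace X"

definition sigma_compact_space :: "'a topology \<Rightarrow> bool" where
  "sigma_compact_space X \<longleftrightarrow>
     (\<exists>K :: nat \<Rightarrow> 'a set. (\<forall>n. compactin X (K n)) \<and> (\<Union>n. K n) = topspace X)"

definition S1_OO :: "'a topology \<Rightarrow> bool" where
  "S1_OO X \<longleftrightarrow>
     (\<forall>\<U> :: nat \<Rightarrow> 'a set set. (\<forall>n. open_cover X (\<U> n)) \<longrightarrow>
        (\<exists>U :: nat \<Rightarrow> 'a set. (\<forall>n. U n \<in> \<U> n) \<and> open_cover X (range U)))"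

text \<open>A strategy for TWO in G_1(O,O) maps the finite history of ONE's moves
  (O_1,...,O_n) (TWO's earlier moves being determined by the strategy itself) to
  TWO's response T_n, which must be a member of the last cover O_n.\<close>
definition TWO_strategy_G1_OO :: "'a topology \<Rightarrow> ('a set set list \<Rightarrow> 'a set) \<Rightarrow> bool" where
  "TWO_strategy_G1_OO X \<sigma> \<longleftrightarrow>
     (\<forall>os. os \<noteq> [] \<and> (\<forall>C\<in>set os. open_cover X C) \<longrightarrow> \<sigma> os \<in> last os)"

definition TWO_winning_G1_OO :: "'a topology \<Rightarrow> ('a set set list \<Rightarrow> 'a set) \<Rightarrow> bool" where
  "TWO_winning_G1_OO X \<sigma> \<longleftrightarrow>
     TWO_strategy_G1_OO X \<sigma> \<and>
     (\<forall>\<O> :: nat \<Rightarrow> 'a set set. (\<forall>n. open_cover X (\<O> n)) \<longrightarrow>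
        (\<Union>n. \<sigma> (map \<O> [0..<Suc n])) = topspace X)"

definition TWO_has_winning_strategy_G1_OO :: "'a topology \<Rightarrow> bool" where
  "TWO_has_winning_strategy_G1_OO X \<longleftrightarrow> (\<exists>\<sigma>. TWO_winning_G1_OO X \<sigma>)"

end

theory Submission
  imports Defs "HOL-Library.Nat_Bijection"
begin

(* Call A coverable if TWO has a strategy whose plays always cover A.  A winning strategy
   for TWO gives S_1(O,O) directly.  Conversely, coverable sets are closed under countable
   unions (interleave the strategies), so by sigma-compactness it suffices to cover each
   compact K.  The set B of points at which K is not locally coverable is compact and has
   no isolated points, since TWO can spend the first move on an isolated point and cover
   the rest by compactness.  A nonempty compact Hausdorff set without isolated points
   carries a Cantor scheme, and the two-element open covers "avoid the left pieces of
   level n" / "avoid the right pieces of level n" defeat S_1(O,O).  So B is empty. *)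

definition TWO_can_cover :: "'a topology \<Rightarrow> 'a set \<Rightarrow> bool" where
  "TWO_can_cover X A \<longleftrightarrow> (\<exists>\<sigma>. TWO_strategy_G1_OO X \<sigma> \<and>
     (\<forall>\<O>. (\<forall>n. open_cover X (\<O> n)) \<longrightarrow> A \<subseteq> (\<Union>n. \<sigma> (map \<O> [0..<Suc n]))))"

lemma TWO_strategy_G1_OO_move:
  assumes "TWO_strategy_G1_OO X \<sigma>" "\<And>n. open_cover X (\<O> n)"
  shows "\<sigma> (map \<O> [0..<Suc n]) \<in> \<O> n"
proof -
  have "\<sigma> (map \<O> [0..<Suc n]) \<in> last (map \<O> [0..<Suc n])"
    using assms unfolding TWO_strategy_G1_OO_def by (simp del: upt_Suc)
  then show ?thesis by simp
qed

lemma TWO_can_cover_subset: "TWO_can_cover X B \<Longrightarrow> A \<subseteq> B \<Longrightarrow> TWO_can_cover X A"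
  unfolding TWO_can_cover_def by blast

lemma TWO_can_cover_empty:
  assumes "topspace X \<noteq> {}" shows "TWO_can_cover X {}"
proof -
  have "TWO_strategy_G1_OO X (\<lambda>os. SOME U. U \<in> last os)"
    unfolding TWO_strategy_G1_OO_def
  proof (intro allI impI)
    fix os :: "'a set set list" assume "os \<noteq> [] \<and> (\<forall>C\<in>set os. open_cover X C)"
    then have "\<Union>(last os) = topspace X" unfolding open_cover_def by auto
    with assms have "last os \<noteq> {}" by (metis Union_empty)
    then show "(SOME U. U \<in> last os) \<in> last os" by (simp add: some_in_eq)
  qed
  then show ?thesis unfolding TWO_can_cover_def by blast
qed

lemma prod_encode_mono2: "j \<le> k \<Longrightarrow> prod_encode (i, j) \<le> prod_encode (i, k)"
proof -
  assume "j \<le> k"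
  then have "(i + j) * Suc (i + j) \<le> (i + k) * Suc (i + k)" by (intro mult_le_mono) auto
  then have "triangle (i + j) \<le> triangle (i + k)" unfolding triangle_def by (rule div_le_mono)
  then show ?thesis unfolding prod_encode_def by simp
qed

lemma TWO_can_cover_UN:
  assumes "\<And>i::nat. TWO_can_cover X (A i)" shows "TWO_can_cover X (\<Union>i. A i)"
proof -
  obtain s where s: "\<And>i. TWO_strategy_G1_OO X (s i)"
    "\<And>i \<O>. (\<forall>n. open_cover X (\<O> n)) \<Longrightarrow> A i \<subseteq> (\<Union>k. s i (map \<O> [0..<Suc k]))"
    using assms unfolding TWO_can_cover_def by metis
  \<comment> \<open>Inning \<open>prod_encode (i, k)\<close> is the \<open>k\<close>-th inning of a play against \<open>s i\<close>.\<close>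
  define sub where "sub os i k = map (\<lambda>j. os ! prod_encode (i, j)) [0..<Suc k]"
    for os :: "'a set set list" and i k
  define \<sigma> where "\<sigma> os = (case prod_decode (length os - 1) of (i, k) \<Rightarrow> s i (sub os i k))" for os
  have "TWO_strategy_G1_OO X \<sigma>" unfolding TWO_strategy_G1_OO_def
  proof (intro allI impI)
    fix os :: "'a set set list" assume os: "os \<noteq> [] \<and> (\<forall>C\<in>set os. open_cover X C)"
    obtain i k where ik: "prod_decode (length os - 1) = (i, k)" by fastforce
    then have last: "prod_encode (i, k) = length os - 1" by (metis prod_decode_inverse)
    have "prod_encode (i, j) < length os" if "j \<le> k" for j
      using prod_encode_mono2[OF that, of i] last os by (cases os) auto
    then have "\<forall>C\<in>set (sub os i k). open_cover X C" using os by (auto simp: sub_def)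
    then have "s i (sub os i k) \<in> last (sub os i k)"
      using s(1) unfolding TWO_strategy_G1_OO_def by (simp add: sub_def del: upt_Suc)
    moreover have "last (sub os i k) = last os" using last os by (simp add: sub_def last_conv_nth)
    ultimately show "\<sigma> os \<in> last os" unfolding \<sigma>_def ik by simp
  qed
  moreover have "(\<Union>i. A i) \<subseteq> (\<Union>n. \<sigma> (map \<O> [0..<Suc n]))" if \<O>: "\<forall>n. open_cover X (\<O> n)" for \<O>
  proof
    fix x assume "x \<in> (\<Union>i. A i)"
    then obtain i where "x \<in> A i" by blast
    then obtain k where k: "x \<in> s i (map (\<lambda>j. \<O> (prod_encode (i, j))) [0..<Suc k])"
      using s(2)[of "\<lambda>j. \<O> (prod_encode (i, j))" i] \<O> by blast
    have "sub (map \<O> [0..<Suc (prod_encode (i, k))]) i k = map (\<lambda>j. \<O> (prod_encode (i, j))) [0..<Suc k]"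
      using prod_encode_mono2[of _ k i] by (simp add: sub_def less_Suc_eq_le del: upt_Suc)
    then have "\<sigma> (map \<O> [0..<Suc (prod_encode (i, k))]) = s i (map (\<lambda>j. \<O> (prod_encode (i, j))) [0..<Suc k])"
      by (simp add: \<sigma>_def del: upt_Suc)
    with k show "x \<in> (\<Union>n. \<sigma> (map \<O> [0..<Suc n]))" by blast
  qed
  ultimately show ?thesis unfolding TWO_can_cover_def by blast
qed

lemma TWO_can_cover_Union:
  assumes "topspace X \<noteq> {}" "countable \<F>" "\<And>A. A \<in> \<F> \<Longrightarrow> TWO_can_cover X A"
  shows "TWO_can_cover X (\<Union>\<F>)"
proof (cases "\<F> = {}")
  case True
  then show ?thesis using TWO_can_cover_empty[OF assms(1)] by simp
next
  case False
  then have "\<Union>\<F> = (\<Union>i. from_nat_into \<F> i)" using assms(2) by simp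
  then show ?thesis using TWO_can_cover_UN assms(3) False from_nat_into by metis
qed

lemma TWO_can_cover_if_cover_outside_nbhds:
  assumes x: "x \<in> topspace X"
    and outside: "\<And>U. openin X U \<Longrightarrow> x \<in> U \<Longrightarrow> TWO_can_cover X (A - U)"
  shows "TWO_can_cover X A"
proof -
  obtain pick where pick: "\<And>Q. open_cover X Q \<Longrightarrow> pick Q \<in> Q \<and> x \<in> pick Q"
    using x unfolding open_cover_def by (metis UnionE)
  obtain \<tau> where \<tau>: "\<And>U. openin X U \<Longrightarrow> x \<in> U \<Longrightarrow> TWO_strategy_G1_OO X (\<tau> U) \<and>
      (\<forall>\<O>. (\<forall>n. open_cover X (\<O> n)) \<longrightarrow> A - U \<subseteq> (\<Union>n. \<tau> U (map \<O> [0..<Suc n])))"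
    using outside unfolding TWO_can_cover_def by metis
  \<comment> \<open>The first move contains \<open>x\<close>; afterwards TWO plays a strategy covering \<open>A - U\<close>.\<close>
  define \<sigma> where "\<sigma> os = (if tl os = [] then pick (hd os) else \<tau> (pick (hd os)) (tl os))" for os
  have pick_open: "openin X (pick Q)" if "open_cover X Q" for Q
    using pick[OF that] that unfolding open_cover_def by blast
  have "TWO_strategy_G1_OO X \<sigma>" unfolding TWO_strategy_G1_OO_def
  proof (intro allI impI)
    fix os :: "'a set set list" assume os: "os \<noteq> [] \<and> (\<forall>C\<in>set os. open_cover X C)"
    then obtain Q rest where os_eq: "os = Q # rest" and Q: "open_cover X Q" by (cases os) auto
    show "\<sigma> os \<in> last os"
    proof (cases "rest = []")
      case True
      then show ?thesis using pick[OF Q] by (simp add: \<sigma>_def os_eq)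
    next
      case False
      then have "\<tau> (pick Q) rest \<in> last rest"
        using \<tau>[OF pick_open[OF Q]] pick[OF Q] os unfolding os_eq TWO_strategy_G1_OO_def by auto
      then show ?thesis using False by (simp add: \<sigma>_def os_eq)
    qed
  qed
  moreover have "A \<subseteq> (\<Union>n. \<sigma> (map \<O> [0..<Suc n]))" if \<O>: "\<forall>n. open_cover X (\<O> n)" for \<O>
  proof
    fix y assume y: "y \<in> A"
    let ?U = "pick (\<O> 0)"
    show "y \<in> (\<Union>n. \<sigma> (map \<O> [0..<Suc n]))"
    proof (cases "y \<in> ?U")
      case True
      then have "y \<in> \<sigma> (map \<O> [0..<Suc 0])" by (simp add: \<sigma>_def)
      then show ?thesis by blast
    next
      case False
      have O0: "open_cover X (\<O> 0)" using \<O> by blast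
      have "A - ?U \<subseteq> (\<Union>n. \<tau> ?U (map (\<lambda>n. \<O> (Suc n)) [0..<Suc n]))"
        using \<tau>[OF pick_open[OF O0]] pick[OF O0] \<O> by (auto dest!: spec[of _ "\<lambda>n. \<O> (Suc n)"])
      then obtain n where "y \<in> \<tau> ?U (map (\<lambda>n. \<O> (Suc n)) [0..<Suc n])"
        using False y by blast
      then have "y \<in> \<sigma> (map \<O> [0..<Suc (Suc n)])"
        unfolding map_upt_Suc[of _ "Suc n"] by (simp add: \<sigma>_def del: upt_Suc)
      then show ?thesis by blast
    qed
  qed
  ultimately show ?thesis unfolding TWO_can_cover_def by blast
qed

lemma TWO_can_cover_compactin_if_locally:
  assumes "topspace X \<noteq> {}" and C: "compactin X C"
    and local: "\<And>x. x \<in> C \<Longrightarrow> \<exists>W. openin X W \<and> x \<in> W \<and> TWO_can_cover X (C \<inter> W)"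
  shows "TWO_can_cover X C"
proof -
  have "C \<subseteq> \<Union>{W. openin X W \<and> TWO_can_cover X (C \<inter> W)}" using local by blast
  then obtain \<F> where \<F>: "finite \<F>" "\<F> \<subseteq> {W. openin X W \<and> TWO_can_cover X (C \<inter> W)}" "C \<subseteq> \<Union>\<F>"
    using C unfolding compactin_def by (metis (no_types, lifting) mem_Collect_eq)
  have "TWO_can_cover X (\<Union>W\<in>\<F>. C \<inter> W)"
    using \<F> by (intro TWO_can_cover_Union assms(1) countable_image countable_finite) auto
  then show ?thesis by (rule TWO_can_cover_subset) (use \<F> in blast)
qed

lemma compactin_Diff_openin:
  assumes "compactin X K" "openin X W" shows "compactin X (K - W)"
proof -
  have "K - W = K \<inter> (topspace X - W)" using compactin_subset_topspace[OF assms(1)] by blast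
  then show ?thesis using assms by (simp add: compact_Int_closedin closedin_diff)
qed

definition compact_nbhd_within :: "'a topology \<Rightarrow> 'a set \<Rightarrow> 'a set \<Rightarrow> bool" where
  "compact_nbhd_within X B D \<longleftrightarrow>
     compactin X D \<and> D \<subseteq> B \<and> (\<exists>V. openin X V \<and> B \<inter> V \<noteq> {} \<and> B \<inter> V \<subseteq> D)"

lemma compact_nbhd_within_subset_open:
  assumes H: "Hausdorff_space X" and B: "compactin X B" and x: "x \<in> B" "x \<in> W" and W: "openin X W"
  obtains D where "compact_nbhd_within X B D" "D \<subseteq> W"
proof -
  have "compactin X {x}" using x(1) compactin_subset_topspace[OF B] by auto
  moreover have "compactin X (B - W)" using B W by (rule compactin_Diff_openin)
  moreover have "disjnt {x} (B - W)" using x by simp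
  ultimately obtain U G where UG: "openin X U" "openin X G" "x \<in> U" "B - W \<subseteq> G" "disjnt U G"
    using Hausdorff_space_compact_separation[OF H] by (metis insert_subset)
  have "compactin X (B - G)" using B UG(2) by (rule compactin_Diff_openin)
  moreover have "B \<inter> U \<noteq> {}" "B \<inter> U \<subseteq> B - G" using UG(3,5) x(1) by (auto simp: disjnt_def)
  ultimately have "compact_nbhd_within X B (B - G)"
    unfolding compact_nbhd_within_def using UG(1) by blast
  moreover have "B - G \<subseteq> W" using UG(4) by blast
  ultimately show thesis by (rule that)
qed

lemma compact_nbhd_within_split:
  assumes H: "Hausdorff_space X" and B: "compactin X B" and perfect: "B \<subseteq> X derived_set_of B"
    and D: "compact_nbhd_within X B D"
  shows "\<exists>D0 D1. compact_nbhd_within X B D0 \<and> compact_nbhd_within X B D1 \<and>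
           D0 \<subseteq> D \<and> D1 \<subseteq> D \<and> D0 \<inter> D1 = {}"
proof -
  obtain V where V: "openin X V" "B \<inter> V \<subseteq> D" and "B \<inter> V \<noteq> {}"
    using D unfolding compact_nbhd_within_def by blast
  then obtain a where a: "a \<in> B" "a \<in> V" by blast
  then have "a \<in> X derived_set_of B" using perfect by blast
  then have "\<exists>b. b \<noteq> a \<and> b \<in> B \<and> b \<in> V"
    using V(1) a(2) unfolding in_derived_set_of by blast
  then obtain b where b: "b \<in> B" "b \<in> V" "b \<noteq> a" by blast
  have "a \<in> topspace X" "b \<in> topspace X" using a b compactin_subset_topspace[OF B] by auto
  then obtain Pa Pb where P: "openin X Pa" "openin X Pb" "a \<in> Pa" "b \<in> Pb" "disjnt Pa Pb"
    using H[unfolded Hausdorff_space_def, rule_format, of a b] b(3) by auto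
  obtain D0 where D0: "compact_nbhd_within X B D0" "D0 \<subseteq> V \<inter> Pa"
    using compact_nbhd_within_subset_open[OF H B a(1), of "V \<inter> Pa"] a(2) P(3)
      openin_Int[OF V(1) P(1)] by blast
  obtain D1 where D1: "compact_nbhd_within X B D1" "D1 \<subseteq> V \<inter> Pb"
    using compact_nbhd_within_subset_open[OF H B b(1), of "V \<inter> Pb"] b(2) P(4)
      openin_Int[OF V(1) P(2)] by blast
  have "D0 \<subseteq> D" "D1 \<subseteq> D" using D0 D1 V(2) unfolding compact_nbhd_within_def by blast+
  moreover have "D0 \<inter> D1 = {}" using D0(2) D1(2) P(5) by (auto simp: disjnt_def)
  ultimately show ?thesis using D0(1) D1(1) by blast
qed

text \<open>The newest choice is the head of the list: \<open>D (i # s)\<close> is the \<open>i\<close>-th half of \<open>D s\<close>.\<close>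

definition Cantor_scheme :: "'a topology \<Rightarrow> (bool list \<Rightarrow> 'a set) \<Rightarrow> bool" where
  "Cantor_scheme X D \<longleftrightarrow> (\<forall>s. compactin X (D s) \<and> D s \<noteq> {}) \<and> (\<forall>i s. D (i # s) \<subseteq> D s) \<and>
     (\<forall>s. D (True # s) \<inter> D (False # s) = {})"

lemma Cantor_scheme_if_splitting:
  assumes "P A" and compact: "\<And>D. P D \<Longrightarrow> compactin X D \<and> D \<noteq> {}"
    and split: "\<And>D. P D \<Longrightarrow> \<exists>D0 D1. P D0 \<and> P D1 \<and> D0 \<subseteq> D \<and> D1 \<subseteq> D \<and> D0 \<inter> D1 = {}"
  shows "\<exists>D. Cantor_scheme X D"
proof -
  obtain half where half: "\<And>D. P D \<Longrightarrow> P (half True D) \<and> P (half False D) \<and>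
      half True D \<subseteq> D \<and> half False D \<subseteq> D \<and> half True D \<inter> half False D = {}"
  proof -
    obtain h0 h1 where "\<And>D. P D \<Longrightarrow> P (h0 D) \<and> P (h1 D) \<and> h0 D \<subseteq> D \<and> h1 D \<subseteq> D \<and> h0 D \<inter> h1 D = {}"
      using split by metis
    then show thesis by (intro that[of "\<lambda>i. if i then h1 else h0"]) auto
  qed
  define D where "D s = foldr half s A" for s
  have D_Cons: "D (i # s) = half i (D s)" for i s by (simp add: D_def)
  have P: "P (D s)" for s
  proof (induction s)
    case Nil
    then show ?case using \<open>P A\<close> by (simp add: D_def)
  next
    case (Cons i s)
    then show ?case using half[OF Cons.IH] unfolding D_Cons by (cases i) auto
  qed
  have "D (i # s) \<subseteq> D s" for i s using half[OF P[of s]] unfolding D_Cons by (cases i) auto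
  then have "Cantor_scheme X D" unfolding Cantor_scheme_def
    using P compact half[OF P] by (auto simp: D_Cons)
  then show ?thesis by blast
qed

lemma perfect_compactin_Cantor_scheme:
  assumes H: "Hausdorff_space X" and B: "compactin X B" "B \<noteq> {}" and perfect: "B \<subseteq> X derived_set_of B"
  shows "\<exists>D. Cantor_scheme X D"
proof (rule Cantor_scheme_if_splitting[where P = "compact_nbhd_within X B"])
  show "compact_nbhd_within X B B"
    using B compactin_subset_topspace[OF B(1)] unfolding compact_nbhd_within_def by blast
  show "compactin X D \<and> D \<noteq> {}" if "compact_nbhd_within X B D" for D
    using that unfolding compact_nbhd_within_def by blast
qed (use compact_nbhd_within_split[OF H B(1) perfect] in blast)

lemma Cantor_scheme_disjoint:
  assumes D: "Cantor_scheme X D" shows "length s = length t \<Longrightarrow> s \<noteq> t \<Longrightarrow> D s \<inter> D t = {}"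
proof (induction s arbitrary: t)
  case Nil
  then show ?case by simp
next
  case (Cons i s)
  then obtain j t' where t: "t = j # t'" "length s = length t'" by (cases t) auto
  show ?case
  proof (cases "s = t'")
    case True
    then have "{i, j} = {True, False}" using Cons.prems(2) t(1) by auto
    moreover have "D (True # t') \<inter> D (False # t') = {}" using D unfolding Cantor_scheme_def by blast
    ultimately show ?thesis unfolding t(1) True by (auto simp: doubleton_eq_iff)
  next
    case False
    then have "D s \<inter> D t' = {}" using Cons.IH t(2) by blast
    then show ?thesis using D unfolding Cantor_scheme_def t(1) by blast
  qed
qed

lemma Hausdorff_decreasing_compactin_Inter_nonempty:
  assumes H: "Hausdorff_space X" and C: "\<And>n. compactin X (C n)" "\<And>n. C n \<noteq> {}"
    and dec: "\<And>n. C (Suc n) \<subseteq> C n"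
  shows "(\<Inter>n. C n) \<noteq> {}"
proof (rule compact_space_imp_nest)
  show "compact_space (subtopology X (C 0))" using C(1) by (simp add: compact_space_subtopology)
  have "C n \<subseteq> C 0" for n using dec by (induction n) auto
  then show "closedin (subtopology X (C 0)) (C n)" for n
    using compactin_imp_closedin[OF H C(1)] by (simp add: closedin_subset_topspace)
  show "decseq C" using dec by (simp add: decseq_Suc_iff)
qed (rule C(2))

lemma not_S1_OO_if_Cantor_scheme:
  assumes H: "Hausdorff_space X" and D: "Cantor_scheme X D"
  shows "\<not> S1_OO X"
proof
  assume "S1_OO X"
  define Y where "Y n i = topspace X - (\<Union>s\<in>{s. length s = n}. D (i # s))" for n i
  have Y_open: "openin X (Y n i)" for n i
  proof -
    have "finite {s :: bool list. length s = n}" using finite_lists_length_eq[of "UNIV :: bool set" n] by simp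
    then have "compactin X (\<Union>s\<in>{s. length s = n}. D (i # s))"
      using D unfolding Cantor_scheme_def by (intro compactin_Union) auto
    then show ?thesis unfolding Y_def by (intro openin_diff openin_topspace compactin_imp_closedin[OF H])
  qed
  have "Y n True \<union> Y n False = topspace X" for n
    using Cantor_scheme_disjoint[OF D, of "True # _" "False # _"] unfolding Y_def by auto
  then have "open_cover X {Y n True, Y n False}" for n
    using Y_open unfolding open_cover_def by auto
  then obtain U where U: "\<And>n. U n \<in> {Y n True, Y n False}" "open_cover X (range U)"
    using \<open>S1_OO X\<close> unfolding S1_OO_def by meson
  then have "\<forall>n. \<exists>i. U n = Y n i" by blast
  then obtain c where c: "\<And>n. U n = Y n (c n)" by metis
  \<comment> \<open>The selected sets choose a side \<open>c n\<close> at every level; the branch of these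
    choices has a point that no selected set contains.\<close>
  define branch where "branch n = rev (map c [0..<n])" for n
  have branch_Suc: "branch (Suc n) = c n # branch n" for n by (simp add: branch_def)
  have "(\<Inter>n. D (branch n)) \<noteq> {}"
    using D unfolding Cantor_scheme_def
    by (intro Hausdorff_decreasing_compactin_Inter_nonempty[OF H]) (auto simp: branch_Suc)
  then obtain x where x: "\<And>n. x \<in> D (branch n)" by blast
  then have "x \<in> topspace X" using D compactin_subset_topspace unfolding Cantor_scheme_def by blast
  then obtain n where "x \<in> Y n (c n)" using U(2) c unfolding open_cover_def by (metis UN_E)
  moreover have "x \<in> D (c n # branch n)" using x[of "Suc n"] by (simp add: branch_Suc)
  ultimately show False unfolding Y_def by (auto simp: branch_def)
qed

lemma perfect_subset_if_not_TWO_can_cover: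
  assumes H: "Hausdorff_space X" and ne: "topspace X \<noteq> {}" and K: "compactin X K"
    and uncovered: "\<not> TWO_can_cover X K"
  shows "\<exists>B. compactin X B \<and> B \<noteq> {} \<and> B \<subseteq> X derived_set_of B"
proof -
  \<comment> \<open>An isolated point \<open>x\<close> of \<open>B\<close> would lie in \<open>G\<close>: TWO covers it with the first
    move, and what remains of a neighbourhood of \<open>x\<close> is a compact set avoiding \<open>B\<close>.\<close>
  define G where "G = \<Union>{W. openin X W \<and> TWO_can_cover X (K \<inter> W)}"
  define B where "B = K - G"
  have "openin X G" unfolding G_def by (rule openin_Union) blast
  with K have B_compact: "compactin X B" unfolding B_def by (rule compactin_Diff_openin)
  have away: "TWO_can_cover X C" if C: "compactin X C" "C \<subseteq> K" "C \<inter> B = {}" for C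
  proof (rule TWO_can_cover_compactin_if_locally[OF ne C(1)])
    fix x assume "x \<in> C"
    then obtain W where W: "openin X W" "x \<in> W" "TWO_can_cover X (K \<inter> W)"
      using C unfolding B_def G_def by blast
    from W(3) have "TWO_can_cover X (C \<inter> W)" by (rule TWO_can_cover_subset) (use C(2) in blast)
    with W(1,2) show "\<exists>W. openin X W \<and> x \<in> W \<and> TWO_can_cover X (C \<inter> W)" by blast
  qed
  have "B \<noteq> {}" using away[OF K] uncovered by blast
  moreover have "B \<subseteq> X derived_set_of B"
  proof
    fix x assume x: "x \<in> B"
    then have xX: "x \<in> topspace X" using compactin_subset_topspace[OF B_compact] by blast
    show "x \<in> X derived_set_of B"
    proof (rule ccontr)
      assume "x \<notin> X derived_set_of B"
      then obtain W where W: "openin X W" "x \<in> W" "B \<inter> W \<subseteq> {x}"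
        using xX unfolding in_derived_set_of by blast
      have "compactin X {x}" using xX by simp
      moreover have "compactin X (K - W)" using K W(1) by (rule compactin_Diff_openin)
      moreover have "disjnt {x} (K - W)" using W(2) by simp
      ultimately obtain U0 G0 where U0: "openin X U0" "x \<in> U0" and G0: "openin X G0" "K - W \<subseteq> G0"
        and "disjnt U0 G0"
        using Hausdorff_space_compact_separation[OF H] by (metis insert_subset)
      have "TWO_can_cover X (K \<inter> U0)"
      proof (rule TWO_can_cover_if_cover_outside_nbhds[OF xX])
        fix U assume U: "openin X U" "x \<in> U"
        have "compactin X (K - (G0 \<union> U))" using K G0(1) U(1) by (intro compactin_Diff_openin) auto
        moreover have "(K - (G0 \<union> U)) \<inter> B = {}" using W(3) G0(2) U(2) unfolding B_def by blast
        ultimately have "TWO_can_cover X (K - (G0 \<union> U))" by (rule away[OF _ Diff_subset])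
        then show "TWO_can_cover X (K \<inter> U0 - U)"
          by (rule TWO_can_cover_subset) (use \<open>disjnt U0 G0\<close> in \<open>auto simp: disjnt_def\<close>)
      qed
      then have "x \<in> G" using U0 unfolding G_def by blast
      then show False using x unfolding B_def by blast
    qed
  qed
  ultimately show ?thesis using B_compact by blast
qed

lemma S1_OO_topspace_nonempty:
  assumes "S1_OO X" shows "topspace X \<noteq> {}"
proof
  assume "topspace X = {}"
  then have "open_cover X {}" by (simp add: open_cover_def)
  then show False using assms[unfolded S1_OO_def, rule_format, of "\<lambda>_. {}"] by auto
qed

lemma TWO_can_cover_compactin:
  assumes H: "Hausdorff_space X" and S1: "S1_OO X" and K: "compactin X K"
  shows "TWO_can_cover X K"
proof (rule ccontr)
  assume "\<not> TWO_can_cover X K"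
  then obtain B where "compactin X B" "B \<noteq> {}" "B \<subseteq> X derived_set_of B"
    using perfect_subset_if_not_TWO_can_cover[OF H S1_OO_topspace_nonempty[OF S1] K] by blast
  then obtain D where "Cantor_scheme X D" using perfect_compactin_Cantor_scheme[OF H] by blast
  then show False using not_S1_OO_if_Cantor_scheme[OF H] S1 by blast
qed

lemma TWO_has_winning_strategy_G1_OO_iff:
  "TWO_has_winning_strategy_G1_OO X \<longleftrightarrow> TWO_can_cover X (topspace X)"
proof
  assume "TWO_has_winning_strategy_G1_OO X"
  then show "TWO_can_cover X (topspace X)"
    unfolding TWO_has_winning_strategy_G1_OO_def TWO_winning_G1_OO_def TWO_can_cover_def
    by (metis order_refl)
next
  assume "TWO_can_cover X (topspace X)"
  then obtain \<sigma> where \<sigma>: "TWO_strategy_G1_OO X \<sigma>"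
    "\<And>\<O>. \<forall>n. open_cover X (\<O> n) \<Longrightarrow> topspace X \<subseteq> (\<Union>n. \<sigma> (map \<O> [0..<Suc n]))"
    unfolding TWO_can_cover_def by blast
  have "(\<Union>n. \<sigma> (map \<O> [0..<Suc n])) = topspace X" if \<O>: "\<forall>n. open_cover X (\<O> n)" for \<O>
  proof (intro subset_antisym UN_least)
    show "\<sigma> (map \<O> [0..<Suc n]) \<subseteq> topspace X" for n
      using TWO_strategy_G1_OO_move[OF \<sigma>(1), of \<O> n] \<O> unfolding open_cover_def by blast
  qed (rule \<sigma>(2)[OF \<O>])
  then show "TWO_has_winning_strategy_G1_OO X"
    unfolding TWO_has_winning_strategy_G1_OO_def TWO_winning_G1_OO_def using \<sigma>(1) by blast
qed

lemma S1_OO_if_TWO_has_winning_strategy: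
  assumes "TWO_has_winning_strategy_G1_OO X" shows "S1_OO X"
  unfolding S1_OO_def
proof (intro allI impI)
  fix \<U> :: "nat \<Rightarrow> 'a set set" assume \<U>: "\<forall>n. open_cover X (\<U> n)"
  obtain \<sigma> where \<sigma>: "TWO_winning_G1_OO X \<sigma>"
    using assms unfolding TWO_has_winning_strategy_G1_OO_def by blast
  define U where "U n = \<sigma> (map \<U> [0..<Suc n])" for n
  have "TWO_strategy_G1_OO X \<sigma>" using \<sigma> unfolding TWO_winning_G1_OO_def by blast
  then have U: "U n \<in> \<U> n" for n
    unfolding U_def by (rule TWO_strategy_G1_OO_move) (use \<U> in blast)
  moreover have "open_cover X (range U)" unfolding open_cover_def
  proof
    show "\<forall>W\<in>range U. openin X W" using U \<U> unfolding open_cover_def by auto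
    show "\<Union>(range U) = topspace X" using \<sigma> \<U> unfolding TWO_winning_G1_OO_def U_def by simp
  qed
  ultimately show "\<exists>U. (\<forall>n. U n \<in> \<U> n) \<and> open_cover X (range U)" by blast
qed

theorem theorem8p5:
  fixes X :: "'a topology"
  assumes "Hausdorff_space X" and "sigma_compact_space X"
  shows "S1_OO X \<longleftrightarrow> TWO_has_winning_strategy_G1_OO X"
proof
  assume S1: "S1_OO X"
  obtain K :: "nat \<Rightarrow> 'a set" where K: "\<And>n. compactin X (K n)" "(\<Union>n. K n) = topspace X"
    using assms(2) unfolding sigma_compact_space_def by blast
  have "TWO_can_cover X (\<Union>n. K n)"
    using TWO_can_cover_compactin[OF assms(1) S1 K(1)] by (rule TWO_can_cover_UN)
  then show "TWO_has_winning_strategy_G1_OO X"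
    unfolding TWO_has_winning_strategy_G1_OO_iff K(2) .
qed (rule S1_OO_if_TWO_has_winning_strategy)

end
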